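(* Let $\Gamma\subseteq\mathbb R^n$ be an open convex set, $S\subseteq\Gamma$ a nonempty convex set, and $f:\Gamma\to\mathbb R$ a Fréchet differentiable function that is quasiconvex on $\Gamma$. Let $\bar S=\arg\min\{f(x)\mid x\in S\}$. If the set $\{x\in\bar S\mid \nabla f(x)\neq 0\}$ is nonempty, then the normalized gradient $\nabla f(x)/\|\nabla f(x)\|$ is constant on this set; i.e., for all $x,y\in\bar S$ with $\nabla f(x)\ne0$, $\nabla f(y)\ne 0$ one has $\nabla f(x)/\|\nabla f(x)\|=\nabla f(y)/\|\nabla f(y)\|$.
   Context: A function $f:\Gamma\to\mathbb R$ on a convex set $\Gamma\subseteq\mathbb R^n$ is quasiconvex on $\Gamma$ iff $f(x+t(y-x))\le\max\{f(x),f(y)\}$ for all $x,y\in\Gamma$ and $t\in[0,1]$. $\|\cdot\|$ is the Euclidean norm. *)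

theory Defs
  imports "HOL-Analysis.Analysis"
begin

definition quasiconvex_on :: "'a::real_vector set \<Rightarrow> ('a \<Rightarrow> real) \<Rightarrow> bool" where
  "quasiconvex_on \<Gamma> f \<longleftrightarrow>
     (\<forall>x\<in>\<Gamma>. \<forall>y\<in>\<Gamma>. \<forall>t::real. 0 \<le> t \<and> t \<le> 1 \<longrightarrow> f (x + t *\<^sub>R (y - x)) \<le> max (f x) (f y))"

definition argmin_on :: "('a \<Rightarrow> real) \<Rightarrow> 'a set \<Rightarrow> 'a set" where
  "argmin_on f S = {x \<in> S. \<forall>y\<in>S. f x \<le> f y}"

end

theory Submission
  imports Defs
begin

text \<open>For a differentiable quasiconvex function the gradient is an outer normal of strict
  sublevel sets: \<open>f z < f x\<close> and \<open>\<nabla>f(x) \<noteq> 0\<close> force \<open>\<nabla>f(x) \<bullet> (z - x) < 0\<close>. For two minimisers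
  \<open>x, y\<close> of \<open>f\<close> on the convex set \<open>S\<close>, first-order optimality at \<open>y\<close> gives
  \<open>\<nabla>f(y) \<bullet> (x - y) \<ge> 0\<close>. Hence every descent direction \<open>d\<close> of \<open>f\<close> at \<open>x\<close> is one at \<open>y\<close>:
  the points \<open>x + t d\<close> lie strictly below the level \<open>f y\<close>, so
  \<open>\<nabla>f(y) \<bullet> (x + t d - y) < 0\<close>. Two nonzero vectors whose open negative half-spaces are
  nested have the same direction.\<close>

lemma has_derivative_along_line:
  assumes "(f has_derivative f') (at x)"
  shows "((\<lambda>t. f (x + t *\<^sub>R v)) has_real_derivative f' v) (at 0)"
proof -
  have "((\<lambda>t::real. x + t *\<^sub>R v) has_derivative (\<lambda>t. t *\<^sub>R v)) (at 0)"
    by (auto intro!: derivative_eq_intros)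
  from has_derivative_compose[OF this] assms
  have "((\<lambda>t. f (x + t *\<^sub>R v)) has_derivative (\<lambda>t. f' (t *\<^sub>R v))) (at 0)"
    by simp
  moreover have "(\<lambda>t. f' (t *\<^sub>R v)) = (*) (f' v)"
    using linear_scale[OF has_derivative_linear[OF assms]] by (simp add: fun_eq_iff)
  ultimately show ?thesis
    by (simp add: has_field_derivative_def)
qed

lemma eventually_increase_along_line:
  fixes f :: "'a::real_normed_vector \<Rightarrow> real"
  assumes "(f has_derivative f') (at x)" "0 < f' v"
  shows "\<forall>\<^sub>F t in at_right 0. f x < f (x + t *\<^sub>R v)"
  using DERIV_pos_inc_right[OF has_derivative_along_line[OF assms(1)] assms(2)]
  by (auto simp: eventually_at_right_field)

lemma eventually_decrease_along_line:
  fixes f :: "'a::real_normed_vector \<Rightarrow> real"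
  assumes "(f has_derivative f') (at x)" "f' v < 0"
  shows "\<forall>\<^sub>F t in at_right 0. f (x + t *\<^sub>R v) < f x"
  using DERIV_neg_dec_right[OF has_derivative_along_line[OF assms(1)] assms(2)]
  by (auto simp: eventually_at_right_field)

lemma eventually_in_open_along_line:
  fixes x v :: "'a::real_normed_vector"
  assumes "open G" "x \<in> G"
  shows "\<forall>\<^sub>F t in at_right 0. x + t *\<^sub>R v \<in> G"
proof -
  have "((\<lambda>t. x + t *\<^sub>R v) \<longlongrightarrow> x) (at_right 0)"
    by (auto intro!: tendsto_eq_intros)
  then show ?thesis
    using assms by (rule topological_tendstoD)
qed

lemma quasiconvex_on_deriv_nonpos:
  assumes "quasiconvex_on \<Gamma> f" "x \<in> \<Gamma>" "z \<in> \<Gamma>" "f z \<le> f x"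
    and "(f has_derivative f') (at x)"
  shows "f' (z - x) \<le> 0"
proof (rule ccontr)
  assume "\<not> ?thesis"
  then have "\<forall>\<^sub>F t in at_right 0. f x < f (x + t *\<^sub>R (z - x)) \<and> t \<in> {0<..<1}"
    using eventually_increase_along_line[OF assms(5)]
    by (intro eventually_conj eventually_at_right_real) simp_all
  then obtain t where "f x < f (x + t *\<^sub>R (z - x))" "t \<in> {0<..<1}"
    using eventually_happens'[OF trivial_limit_at_right_real] by blast
  moreover have "f (x + t *\<^sub>R (z - x)) \<le> max (f x) (f z)"
    using assms(1-3) \<open>t \<in> {0<..<1}\<close> unfolding quasiconvex_on_def by simp
  ultimately show False
    using assms(4) by simp
qed

lemma quasiconvex_on_gradient_inner_neg:
  fixes f :: "'a::real_inner \<Rightarrow> real"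
  assumes "open \<Gamma>" "quasiconvex_on \<Gamma> f" "x \<in> \<Gamma>" "z \<in> \<Gamma>" "f z < f x"
    and "(f has_derivative (\<lambda>h. a \<bullet> h)) (at x)" "a \<noteq> 0"
    and "isCont f z"
  shows "a \<bullet> (z - x) < 0"
proof (rule ccontr)
  assume "\<not> a \<bullet> (z - x) < 0"
  \<comment> \<open>Push \<open>z\<close> a little along \<open>a\<close>: this keeps it strictly below \<open>f x\<close> and makes the
    non-strict inequality at the new point contradict the assumption.\<close>
  have "((\<lambda>t. f (z + t *\<^sub>R a)) \<longlongrightarrow> f z) (at_right 0)"
    using assms(8) by (rule isCont_tendsto_compose) (auto intro!: tendsto_eq_intros)
  then have "\<forall>\<^sub>F t in at_right 0. f (z + t *\<^sub>R a) < f x \<and> z + t *\<^sub>R a \<in> \<Gamma> \<and> 0 < t"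
    using assms(1,4,5)
    by (intro eventually_conj order_tendstoD(2) eventually_in_open_along_line eventually_at_right_less)
  then obtain t where "f (z + t *\<^sub>R a) < f x" "z + t *\<^sub>R a \<in> \<Gamma>" "0 < t"
    using eventually_happens'[OF trivial_limit_at_right_real] by blast
  then have "a \<bullet> (z + t *\<^sub>R a - x) \<le> 0"
    using quasiconvex_on_deriv_nonpos[OF assms(2,3) _ _ assms(6)] by simp
  moreover have "a \<bullet> (z + t *\<^sub>R a - x) = a \<bullet> (z - x) + t * (a \<bullet> a)"
    by (simp add: algebra_simps)
  moreover have "0 < t * (a \<bullet> a)"
    using \<open>0 < t\<close> \<open>a \<noteq> 0\<close> by simp
  ultimately show False
    using \<open>\<not> a \<bullet> (z - x) < 0\<close> by linarith
qed

lemma argmin_on_deriv_nonneg: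
  assumes "convex S" "y \<in> argmin_on f S" "x \<in> S" "(f has_derivative f') (at y)"
  shows "0 \<le> f' (x - y)"
proof (rule ccontr)
  assume "\<not> ?thesis"
  then have "\<forall>\<^sub>F t in at_right 0. f (y + t *\<^sub>R (x - y)) < f y \<and> t \<in> {0<..<1}"
    using eventually_decrease_along_line[OF assms(4)]
    by (intro eventually_conj eventually_at_right_real) simp_all
  then obtain t where t: "f (y + t *\<^sub>R (x - y)) < f y" "t \<in> {0<..<1}"
    using eventually_happens'[OF trivial_limit_at_right_real] by blast
  have "y + t *\<^sub>R (x - y) = (1 - t) *\<^sub>R y + t *\<^sub>R x"
    by (simp add: algebra_simps)
  then have "y + t *\<^sub>R (x - y) \<in> S"
    using assms(1-3) t(2) by (simp add: argmin_on_def convex_def)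
  then show False
    using assms(2) t(1) by (force simp: argmin_on_def)
qed

lemma quasiconvex_on_descent_direction_transfer:
  fixes f :: "'a::real_inner \<Rightarrow> real"
  assumes "open \<Gamma>" "quasiconvex_on \<Gamma> f" "x \<in> \<Gamma>" "y \<in> \<Gamma>" "f x \<le> f y"
    and deriv: "\<And>z. z \<in> \<Gamma> \<Longrightarrow> (f has_derivative (\<lambda>h. grad z \<bullet> h)) (at z)"
    and "grad y \<noteq> 0" "0 \<le> grad y \<bullet> (x - y)" "grad x \<bullet> d < 0"
  shows "grad y \<bullet> d < 0"
proof -
  have "\<forall>\<^sub>F t in at_right 0. f (x + t *\<^sub>R d) < f x \<and> x + t *\<^sub>R d \<in> \<Gamma> \<and> 0 < t"
    using eventually_decrease_along_line[OF deriv[OF assms(3)]] assms(1,3,9)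
    by (intro eventually_conj eventually_in_open_along_line eventually_at_right_less)
  then obtain t where t: "f (x + t *\<^sub>R d) < f x" "x + t *\<^sub>R d \<in> \<Gamma>" "0 < t"
    using eventually_happens'[OF trivial_limit_at_right_real] by blast
  have "grad y \<bullet> (x + t *\<^sub>R d - y) < 0"
    using t assms(5) deriv[OF t(2)]
    by (intro quasiconvex_on_gradient_inner_neg[OF assms(1,2,4) t(2) _ deriv[OF assms(4)] assms(7)])
      (auto intro: has_derivative_continuous)
  moreover have "grad y \<bullet> (x + t *\<^sub>R d - y) = grad y \<bullet> (x - y) + t * (grad y \<bullet> d)"
    by (simp add: algebra_simps)
  ultimately have "t * (grad y \<bullet> d) < 0"
    using assms(8) by linarith
  then show ?thesis
    using t(3) by (simp add: mult_less_0_iff)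
qed

lemma sgn_eq_if_inner_neg_imp_inner_neg:
  fixes a b :: "'a::real_inner"
  assumes "a \<noteq> 0" and neg_imp: "\<And>d. a \<bullet> d < 0 \<Longrightarrow> b \<bullet> d < 0"
  shows "sgn a = sgn b"
proof (rule ccontr)
  assume ne: "sgn a \<noteq> sgn b"
  have "b \<noteq> 0"
    using neg_imp[of "- a"] assms(1) by auto
  have inner_sgn: "v \<bullet> d = norm v * (sgn v \<bullet> d)" for v d :: 'a
    by (cases "v = 0") (simp_all add: sgn_div_norm)
  have unit: "sgn a \<bullet> sgn a = 1" "sgn b \<bullet> sgn b = 1"
    using assms(1) \<open>b \<noteq> 0\<close> by (simp_all add: dot_square_norm norm_sgn)
  have "0 < norm (sgn a - sgn b)^2"
    using ne by simp
  also have "\<dots> = 2 - 2 * (sgn a \<bullet> sgn b)"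
    using unit by (simp add: power2_norm_eq_inner inner_diff inner_commute)
  finally have cos_lt_1: "sgn a \<bullet> sgn b < 1" by simp
  define d where "d = sgn b - sgn a"
  have "a \<bullet> d = norm a * (sgn a \<bullet> sgn b - 1)"
    using inner_sgn[of a d] unit by (simp add: d_def inner_diff_right)
  also have "\<dots> < 0"
    using assms(1) cos_lt_1 by (simp add: mult_pos_neg)
  finally have "b \<bullet> d < 0" by (rule neg_imp)
  moreover have "b \<bullet> d = norm b * (1 - sgn a \<bullet> sgn b)"
    using inner_sgn[of b d] unit by (simp add: d_def inner_diff_right inner_commute)
  ultimately show False
    using \<open>b \<noteq> 0\<close> cos_lt_1 by (simp add: mult_less_0_iff)
qed

theorem lemma5:
  fixes \<Gamma> S :: "(real ^ 'n) set"
    and f :: "real ^ 'n \<Rightarrow> real"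
    and grad :: "real ^ 'n \<Rightarrow> real ^ 'n"
  assumes "open \<Gamma>" and "convex \<Gamma>"
    and "S \<subseteq> \<Gamma>" and "S \<noteq> {}" and "convex S"
    and "\<And>x. x \<in> \<Gamma> \<Longrightarrow> (f has_derivative (\<lambda>h. grad x \<bullet> h)) (at x)"
    and "quasiconvex_on \<Gamma> f"
    and "x \<in> argmin_on f S" and "y \<in> argmin_on f S"
    and "grad x \<noteq> 0" and "grad y \<noteq> 0"
  shows "grad x /\<^sub>R norm (grad x) = grad y /\<^sub>R norm (grad y)"
proof -
  have "x \<in> S" "y \<in> S" "f x \<le> f y"
    using assms(8,9) by (auto simp: argmin_on_def)
  then have "x \<in> \<Gamma>" "y \<in> \<Gamma>"
    using assms(3) by auto
  have "0 \<le> grad y \<bullet> (x - y)"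
    using argmin_on_deriv_nonneg[OF assms(5,9) \<open>x \<in> S\<close> assms(6)[OF \<open>y \<in> \<Gamma>\<close>]] .
  then have "grad x \<bullet> d < 0 \<Longrightarrow> grad y \<bullet> d < 0" for d
    using quasiconvex_on_descent_direction_transfer[OF assms(1,7) \<open>x \<in> \<Gamma>\<close> \<open>y \<in> \<Gamma>\<close>
        \<open>f x \<le> f y\<close> assms(6) assms(11)] by blast
  then have "sgn (grad x) = sgn (grad y)"
    using sgn_eq_if_inner_neg_imp_inner_neg assms(10) by blast
  then show ?thesis
    by (simp add: sgn_div_norm)
qed

end
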